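(* Let $R$ be a commutative ring with identity and $M$ a non-zero comultiplication $R$-module such that $G'(M)$ is non-null. The following are equivalent: (i) $G'(M)$ is not connected; (ii) $|\mathrm{Min}(M)|=2$; (iii) $G'(M)$ is the disjoint union of two complete subgraphs $G'_1$ and $G'_2$ with no edges between them.
   Context: An $R$-module $M$ is a comultiplication module if for every submodule $N$ of $M$ there is an ideal $I$ of $R$ with $N=\mathrm{Ann}_M(I)$. A submodule $N$ of $M$ is large if $N\cap L\neq 0$ for every non-zero submodule $L$ of $M$. $\mathrm{Min}(M)$ is the set of minimal submodules of $M$. The large sum graph $G'(M)$ has as vertex set the set of all non-zero non-large submodules of $M$, and two distinct vertices $N,K$ are adjacent iff $N+K$ is non-large in $M$. *)

theory Defs
  imports "HOL-Algebra.Algebra"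
begin

definition ann_M :: "('a, 'c) ring_scheme \<Rightarrow> ('a, 'b, 'd) module_scheme \<Rightarrow> 'a set \<Rightarrow> 'b set" where
  "ann_M R M I = {m \<in> carrier M. \<forall>r \<in> I. r \<odot>\<^bsub>M\<^esub> m = \<zero>\<^bsub>M\<^esub>}"

definition comultiplication_module :: "('a, 'c) ring_scheme \<Rightarrow> ('a, 'b, 'd) module_scheme \<Rightarrow> bool" where
  "comultiplication_module R M \<longleftrightarrow>
     (\<forall>N. submodule N R M \<longrightarrow> (\<exists>I. ideal I R \<and> N = ann_M R M I))"

definition large_submodule :: "('a, 'c) ring_scheme \<Rightarrow> ('a, 'b, 'd) module_scheme \<Rightarrow> 'b set \<Rightarrow> bool" where
  "large_submodule R M N \<longleftrightarrow> submodule N R M \<and>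
     (\<forall>L. submodule L R M \<and> L \<noteq> {\<zero>\<^bsub>M\<^esub>} \<longrightarrow> N \<inter> L \<noteq> {\<zero>\<^bsub>M\<^esub>})"

definition Min_sub :: "('a, 'c) ring_scheme \<Rightarrow> ('a, 'b, 'd) module_scheme \<Rightarrow> 'b set set" where
  "Min_sub R M = {N. submodule N R M \<and> N \<noteq> {\<zero>\<^bsub>M\<^esub>} \<and>
     (\<forall>L. submodule L R M \<and> L \<subseteq> N \<longrightarrow> L = {\<zero>\<^bsub>M\<^esub>} \<or> L = N)}"

definition lsg_vertices :: "('a, 'c) ring_scheme \<Rightarrow> ('a, 'b, 'd) module_scheme \<Rightarrow> 'b set set" where
  "lsg_vertices R M = {N. submodule N R M \<and> N \<noteq> {\<zero>\<^bsub>M\<^esub>} \<and> \<not> large_submodule R M N}"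

definition lsg_adj :: "('a, 'c) ring_scheme \<Rightarrow> ('a, 'b, 'd) module_scheme \<Rightarrow> 'b set \<Rightarrow> 'b set \<Rightarrow> bool" where
  "lsg_adj R M N K \<longleftrightarrow> N \<in> lsg_vertices R M \<and> K \<in> lsg_vertices R M \<and> N \<noteq> K \<and>
     \<not> large_submodule R M (N <+>\<^bsub>M\<^esub> K)"

definition graph_connected :: "'v set \<Rightarrow> ('v \<Rightarrow> 'v \<Rightarrow> bool) \<Rightarrow> bool" where
  "graph_connected V E \<longleftrightarrow> (\<forall>x \<in> V. \<forall>y \<in> V. (x, y) \<in> {(u, v). E u v}\<^sup>*)"

end

theory Submission
  imports Defs
begin

text \<open>
  In a comultiplication module a submodule is recovered from its annihilator, so
  \<open>S \<subseteq> N\<close> holds iff \<open>Ann N \<subseteq> Ann S\<close>. Every non-zero submodule contains a minimal one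
  (take \<open>x \<noteq> 0\<close>, a maximal ideal \<open>m \<supseteq> Ann x\<close>, and an element of \<open>Rx\<close> killed by \<open>m\<close>), and
  the annihilator of a minimal submodule \<open>S\<close> is prime, so \<open>S \<subseteq> N + K\<close> forces \<open>S \<subseteq> N\<close> or
  \<open>S \<subseteq> K\<close>. Hence a submodule is large iff it contains all minimal submodules, and two
  distinct vertices of \<open>G'(M)\<close> are adjacent iff some minimal submodule lies in neither.
  With three minimal submodules any two vertices are joined by a path of length at most
  two through a minimal submodule; with exactly two, \<open>S\<^sub>1\<close> and \<open>S\<^sub>2\<close>, every vertex contains
  exactly one of them, and the two classes are the two cliques.
\<close>

section \<open>Ideals\<close>

lemma (in cring) idealI_left_closed:
  assumes "J \<subseteq> carrier R" "\<zero> \<in> J" "\<And>a b. a \<in> J \<Longrightarrow> b \<in> J \<Longrightarrow> a \<oplus> b \<in> J"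
    and "\<And>a x. a \<in> J \<Longrightarrow> x \<in> carrier R \<Longrightarrow> x \<otimes> a \<in> J"
  shows "ideal J R"
proof (rule idealI[OF ring_axioms])
  have "\<ominus> a \<in> J" if a: "a \<in> J" for a
  proof -
    have "(\<ominus> \<one>) \<otimes> a = \<ominus> a" using a assms(1) by (simp add: l_minus subsetD)
    thus ?thesis using assms(4)[OF a, of "\<ominus> \<one>"] by simp
  qed
  thus "subgroup J (add_monoid R)"
    by (intro add.subgroupI) (use assms(1-3) in \<open>auto simp: a_inv_def\<close>)
next
  fix a x assume "a \<in> J" "x \<in> carrier R"
  thus "x \<otimes> a \<in> J" using assms(4) by blast
  thus "a \<otimes> x \<in> J" using \<open>a \<in> J\<close> \<open>x \<in> carrier R\<close> assms(1) m_comm by (metis subsetD)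
qed

lemma (in ring) exists_maximalideal_superset:
  assumes I: "ideal I R" and one: "\<one> \<notin> I"
  shows "\<exists>m. maximalideal m R \<and> I \<subseteq> m"
proof -
  define F where "F = {J. ideal J R \<and> I \<subseteq> J \<and> \<one> \<notin> J}"
  have "\<exists>m\<in>F. \<forall>J\<in>F. m \<subseteq> J \<longrightarrow> J = m"
  proof (rule subset_Zorn_nonempty)
    show "F \<noteq> {}" using I one unfolding F_def by blast
    fix C assume C: "C \<noteq> {}" "subset.chain F C"
    have CF: "C \<subseteq> F" using C(2) unfolding pred_on.chain_def by blast
    have "subset.chain {J. ideal J R} C" using C(2) unfolding pred_on.chain_def F_def by blast
    hence "ideal (\<Union>C) R" using chain_Union_is_ideal[of C] C(1) by simp
    moreover have "I \<subseteq> \<Union>C" using C(1) CF unfolding F_def by blast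
    moreover have "\<one> \<notin> \<Union>C" using CF unfolding F_def by blast
    ultimately show "\<Union>C \<in> F" by (simp add: F_def)
  qed
  then obtain m where "m \<in> F" and m_max: "\<And>J. J \<in> F \<Longrightarrow> m \<subseteq> J \<Longrightarrow> J = m" by blast
  hence m: "ideal m R" "I \<subseteq> m" "\<one> \<notin> m" unfolding F_def by simp_all
  have "maximalideal m R"
  proof (rule maximalidealI[OF m(1)])
    show "carrier R \<noteq> m" using m(3) by blast
    fix J assume J: "ideal J R" "m \<subseteq> J" "J \<subseteq> carrier R"
    show "J = m \<or> J = carrier R"
    proof (cases "\<one> \<in> J")
      case True
      thus ?thesis using ideal.one_imp_carrier[OF J(1)] by blast
    next
      case False
      hence "J \<in> F" unfolding F_def using J(1,2) m(2) by blast
      thus ?thesis using m_max J(2) by blast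
    qed
  qed
  thus ?thesis using m(2) by blast
qed

lemma (in maximalideal) one_not_mem: "\<one>\<^bsub>R\<^esub> \<notin> I"
  using I_notcarr one_imp_carrier by blast

section \<open>Submodules, annihilators and minimal submodules\<close>

definition ann_R :: "('a, 'c) ring_scheme \<Rightarrow> ('a, 'b, 'd) module_scheme \<Rightarrow> 'b set \<Rightarrow> 'a set" where
  "ann_R R M N = {r \<in> carrier R. \<forall>x \<in> N. r \<odot>\<^bsub>M\<^esub> x = \<zero>\<^bsub>M\<^esub>}"

definition cyclic_submodule :: "('a, 'c) ring_scheme \<Rightarrow> ('a, 'b, 'd) module_scheme \<Rightarrow> 'b \<Rightarrow> 'b set" where
  "cyclic_submodule R M x = {a \<odot>\<^bsub>M\<^esub> x | a. a \<in> carrier R}"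

context module
begin

lemma submoduleI_smult:
  assumes "H \<subseteq> carrier M" "\<zero>\<^bsub>M\<^esub> \<in> H" "\<And>a b. a \<in> H \<Longrightarrow> b \<in> H \<Longrightarrow> a \<oplus>\<^bsub>M\<^esub> b \<in> H"
    and "\<And>a x. a \<in> carrier R \<Longrightarrow> x \<in> H \<Longrightarrow> a \<odot>\<^bsub>M\<^esub> x \<in> H"
  shows "submodule H R M"
proof (rule submoduleI[OF assms(1,2)])
  fix a assume a: "a \<in> H"
  have "(\<ominus> \<one>) \<odot>\<^bsub>M\<^esub> a = \<ominus>\<^bsub>M\<^esub> a" using a assms(1) smult_l_minus[of \<one> a] by (simp add: subsetD)
  moreover have "(\<ominus> \<one>) \<odot>\<^bsub>M\<^esub> a \<in> H" using assms(4) a by simp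
  ultimately show "\<ominus>\<^bsub>M\<^esub> a \<in> H" by simp
qed (use assms in auto)

lemma smult_commute:
  "a \<in> carrier R \<Longrightarrow> b \<in> carrier R \<Longrightarrow> x \<in> carrier M \<Longrightarrow> a \<odot>\<^bsub>M\<^esub> (b \<odot>\<^bsub>M\<^esub> x) = b \<odot>\<^bsub>M\<^esub> (a \<odot>\<^bsub>M\<^esub> x)"
  by (metis m_comm smult_assoc1)

lemma submodule_zero: "submodule H R M \<Longrightarrow> \<zero>\<^bsub>M\<^esub> \<in> H"
  by (metis additive_subgroup.zero_closed additive_subgroup_def submodule.axioms(1))

lemma submodule_Int:
  assumes N: "submodule N R M" and K: "submodule K R M"
  shows "submodule (N \<inter> K) R M"
proof (rule submoduleI_smult)
  show "N \<inter> K \<subseteq> carrier M" using submoduleE(1)[OF N] by blast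
  show "\<zero>\<^bsub>M\<^esub> \<in> N \<inter> K" using submodule_zero N K by blast
  show "a \<oplus>\<^bsub>M\<^esub> b \<in> N \<inter> K" if "a \<in> N \<inter> K" "b \<in> N \<inter> K" for a b
    using that submoduleE(5)[OF N] submoduleE(5)[OF K] by blast
  show "a \<odot>\<^bsub>M\<^esub> x \<in> N \<inter> K" if "a \<in> carrier R" "x \<in> N \<inter> K" for a x
    using that submodule.smult_closed[OF N] submodule.smult_closed[OF K] by blast
qed

lemma submodule_set_add:
  assumes N: "submodule N R M" and K: "submodule K R M"
  shows "submodule (N <+>\<^bsub>M\<^esub> K) R M"
proof (rule submoduleI_smult)
  note carrier = submoduleE(1)[OF N] submoduleE(1)[OF K]
  show "N <+>\<^bsub>M\<^esub> K \<subseteq> carrier M"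
  proof
    fix z assume "z \<in> N <+>\<^bsub>M\<^esub> K"
    then obtain h k where "h \<in> N" "k \<in> K" "z = h \<oplus>\<^bsub>M\<^esub> k" unfolding set_add_def' by blast
    thus "z \<in> carrier M" using carrier by (simp add: subsetD)
  qed
  have "\<zero>\<^bsub>M\<^esub> = \<zero>\<^bsub>M\<^esub> \<oplus>\<^bsub>M\<^esub> \<zero>\<^bsub>M\<^esub>" by simp
  thus "\<zero>\<^bsub>M\<^esub> \<in> N <+>\<^bsub>M\<^esub> K"
    unfolding set_add_def' using submodule_zero[OF N] submodule_zero[OF K] by blast
  fix a b assume "a \<in> N <+>\<^bsub>M\<^esub> K" "b \<in> N <+>\<^bsub>M\<^esub> K"
  then obtain h k h' k' where hk: "h \<in> N" "k \<in> K" "a = h \<oplus>\<^bsub>M\<^esub> k"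
      "h' \<in> N" "k' \<in> K" "b = h' \<oplus>\<^bsub>M\<^esub> k'"
    unfolding set_add_def' by blast
  have "h \<in> carrier M" "k \<in> carrier M" "h' \<in> carrier M" "k' \<in> carrier M"
    using hk carrier by (simp_all add: subsetD)
  hence "a \<oplus>\<^bsub>M\<^esub> b = (h \<oplus>\<^bsub>M\<^esub> h') \<oplus>\<^bsub>M\<^esub> (k \<oplus>\<^bsub>M\<^esub> k')"
    using hk(3,6) by (simp add: M.a_ac)
  moreover have "h \<oplus>\<^bsub>M\<^esub> h' \<in> N" "k \<oplus>\<^bsub>M\<^esub> k' \<in> K"
    using submoduleE(5)[OF N hk(1,4)] submoduleE(5)[OF K hk(2,5)] .
  ultimately show "a \<oplus>\<^bsub>M\<^esub> b \<in> N <+>\<^bsub>M\<^esub> K" unfolding set_add_def' by blast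
next
  note carrier = submoduleE(1)[OF N] submoduleE(1)[OF K]
  fix a z assume a: "a \<in> carrier R" and "z \<in> N <+>\<^bsub>M\<^esub> K"
  then obtain h k where hk: "h \<in> N" "k \<in> K" "z = h \<oplus>\<^bsub>M\<^esub> k" unfolding set_add_def' by blast
  have "h \<in> carrier M" "k \<in> carrier M" using hk carrier by (simp_all add: subsetD)
  hence "a \<odot>\<^bsub>M\<^esub> z = a \<odot>\<^bsub>M\<^esub> h \<oplus>\<^bsub>M\<^esub> a \<odot>\<^bsub>M\<^esub> k"
    using smult_r_distr[OF a] hk(3) by simp
  moreover have "a \<odot>\<^bsub>M\<^esub> h \<in> N" "a \<odot>\<^bsub>M\<^esub> k \<in> K"
    using submodule.smult_closed[OF N a hk(1)] submodule.smult_closed[OF K a hk(2)] .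
  ultimately show "a \<odot>\<^bsub>M\<^esub> z \<in> N <+>\<^bsub>M\<^esub> K" unfolding set_add_def' by blast
qed

lemma set_add_upper:
  assumes N: "submodule N R M" and K: "submodule K R M"
  shows "N \<subseteq> N <+>\<^bsub>M\<^esub> K" and "K \<subseteq> N <+>\<^bsub>M\<^esub> K"
proof -
  have "h = h \<oplus>\<^bsub>M\<^esub> \<zero>\<^bsub>M\<^esub>" if "h \<in> N" for h using that submoduleE(1)[OF N] by (simp add: subsetD)
  thus "N \<subseteq> N <+>\<^bsub>M\<^esub> K" unfolding set_add_def' using submodule_zero[OF K] by blast
  have "k = \<zero>\<^bsub>M\<^esub> \<oplus>\<^bsub>M\<^esub> k" if "k \<in> K" for k using that submoduleE(1)[OF K] by (simp add: subsetD)
  thus "K \<subseteq> N <+>\<^bsub>M\<^esub> K" unfolding set_add_def' using submodule_zero[OF N] by blast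
qed

lemma submodule_smult_ideal:
  assumes I: "ideal I R" and x: "x \<in> carrier M"
  shows "submodule {r \<odot>\<^bsub>M\<^esub> x | r. r \<in> I} R M"
proof -
  have I_carrier: "I \<subseteq> carrier R" using ideal.axioms(1)[OF I] by (rule additive_subgroup.a_subset)
  show ?thesis
  proof (rule submoduleI_smult)
    show "{r \<odot>\<^bsub>M\<^esub> x | r. r \<in> I} \<subseteq> carrier M" using I_carrier x by auto
    show "\<zero>\<^bsub>M\<^esub> \<in> {r \<odot>\<^bsub>M\<^esub> x | r. r \<in> I}"
      using x additive_subgroup.zero_closed[OF ideal.axioms(1)[OF I]] by force
    fix a b assume "a \<in> {r \<odot>\<^bsub>M\<^esub> x | r. r \<in> I}" "b \<in> {r \<odot>\<^bsub>M\<^esub> x | r. r \<in> I}"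
    then obtain r s where rs: "r \<in> I" "s \<in> I" "a = r \<odot>\<^bsub>M\<^esub> x" "b = s \<odot>\<^bsub>M\<^esub> x" by blast
    hence "a \<oplus>\<^bsub>M\<^esub> b = (r \<oplus> s) \<odot>\<^bsub>M\<^esub> x"
      using I_carrier x by (simp add: smult_l_distr subsetD)
    moreover have "r \<oplus> s \<in> I"
      using rs(1,2) additive_subgroup.a_closed[OF ideal.axioms(1)[OF I]] by blast
    ultimately show "a \<oplus>\<^bsub>M\<^esub> b \<in> {r \<odot>\<^bsub>M\<^esub> x | r. r \<in> I}" by blast
  next
    fix a z assume a: "a \<in> carrier R" and "z \<in> {r \<odot>\<^bsub>M\<^esub> x | r. r \<in> I}"
    then obtain r where r: "r \<in> I" "z = r \<odot>\<^bsub>M\<^esub> x" by blast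
    hence "a \<odot>\<^bsub>M\<^esub> z = (a \<otimes> r) \<odot>\<^bsub>M\<^esub> x" using a I_carrier x by (simp add: smult_assoc1 subsetD)
    thus "a \<odot>\<^bsub>M\<^esub> z \<in> {r \<odot>\<^bsub>M\<^esub> x | r. r \<in> I}" using ideal.I_l_closed[OF I r(1) a] by blast
  qed
qed

lemma submodule_cyclic: "x \<in> carrier M \<Longrightarrow> submodule (cyclic_submodule R M x) R M"
  unfolding cyclic_submodule_def by (rule submodule_smult_ideal[OF oneideal])

lemma cyclic_submodule_self: "x \<in> carrier M \<Longrightarrow> x \<in> cyclic_submodule R M x"
  unfolding cyclic_submodule_def by (intro CollectI exI[of _ \<one>]) simp

lemma cyclic_submodule_subset: "submodule H R M \<Longrightarrow> x \<in> H \<Longrightarrow> cyclic_submodule R M x \<subseteq> H"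
  unfolding cyclic_submodule_def using submodule.smult_closed by fastforce

lemma ideal_ann_R: "N \<subseteq> carrier M \<Longrightarrow> ideal (ann_R R M N) R"
  by (rule idealI_left_closed) (auto simp: ann_R_def smult_l_distr smult_assoc1 subsetD)

lemma ideal_colon:
  assumes L: "submodule L R M" and y: "y \<in> carrier M"
  shows "ideal {a \<in> carrier R. a \<odot>\<^bsub>M\<^esub> y \<in> L} R"
proof (rule idealI_left_closed)
  show "\<zero> \<in> {a \<in> carrier R. a \<odot>\<^bsub>M\<^esub> y \<in> L}" using y submodule_zero[OF L] by simp
  show "a \<oplus> b \<in> {a \<in> carrier R. a \<odot>\<^bsub>M\<^esub> y \<in> L}"
    if "a \<in> {a \<in> carrier R. a \<odot>\<^bsub>M\<^esub> y \<in> L}" "b \<in> {a \<in> carrier R. a \<odot>\<^bsub>M\<^esub> y \<in> L}" for a b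
    using that y submoduleE(5)[OF L] by (simp add: smult_l_distr)
  show "c \<otimes> a \<in> {a \<in> carrier R. a \<odot>\<^bsub>M\<^esub> y \<in> L}"
    if "a \<in> {a \<in> carrier R. a \<odot>\<^bsub>M\<^esub> y \<in> L}" "c \<in> carrier R" for a c
    using that y submodule.smult_closed[OF L] by (simp add: smult_assoc1)
qed blast

lemma Min_subD:
  assumes "S \<in> Min_sub R M"
  shows "submodule S R M" "S \<noteq> {\<zero>\<^bsub>M\<^esub>}"
    and "\<And>L. submodule L R M \<Longrightarrow> L \<subseteq> S \<Longrightarrow> L = {\<zero>\<^bsub>M\<^esub>} \<or> L = S"
  using assms unfolding Min_sub_def by auto

lemma Min_sub_not_subset:
  "S \<in> Min_sub R M \<Longrightarrow> T \<in> Min_sub R M \<Longrightarrow> S \<noteq> T \<Longrightarrow> \<not> S \<subseteq> T"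
  using Min_subD by blast

lemma Min_sub_subset_Int:
  assumes S: "S \<in> Min_sub R M" and N: "submodule N R M" and "N \<inter> S \<noteq> {\<zero>\<^bsub>M\<^esub>}"
  shows "S \<subseteq> N"
  using Min_subD(3)[OF S submodule_Int[OF N Min_subD(1)[OF S]]] assms(3) by blast

lemma Min_sub_eq_cyclic:
  assumes S: "S \<in> Min_sub R M" and y: "y \<in> S" "y \<noteq> \<zero>\<^bsub>M\<^esub>"
  shows "cyclic_submodule R M y = S"
proof -
  have "y \<in> carrier M" using y(1) submoduleE(1)[OF Min_subD(1)[OF S]] by blast
  thus ?thesis
    using Min_subD(3)[OF S submodule_cyclic cyclic_submodule_subset[OF Min_subD(1)[OF S] y(1)]]
      cyclic_submodule_self y(2) by blast
qed

lemma primeideal_ann_R_Min_sub: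
  assumes S: "S \<in> Min_sub R M"
  shows "primeideal (ann_R R M S) R"
proof -
  note S_sub = Min_subD(1)[OF S] and S_carrier = submoduleE(1)[OF Min_subD(1)[OF S]]
  show ?thesis
  proof (rule primeidealI[OF ideal_ann_R[OF S_carrier] is_cring])
    show "carrier R \<noteq> ann_R R M S"
      using Min_subD(2)[OF S] submodule_zero[OF S_sub] S_carrier by (force simp: ann_R_def)
    fix r s assume r: "r \<in> carrier R" and s: "s \<in> carrier R" and rs: "r \<otimes> s \<in> ann_R R M S"
    show "r \<in> ann_R R M S \<or> s \<in> ann_R R M S"
    proof (cases "r \<in> ann_R R M S")
      case False
      then obtain y where y: "y \<in> S" "r \<odot>\<^bsub>M\<^esub> y \<noteq> \<zero>\<^bsub>M\<^esub>" using r by (auto simp: ann_R_def)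
      have y_carrier: "y \<in> carrier M" using y(1) S_carrier by blast
      \<comment> \<open>\<open>S\<close> is generated by \<open>r y\<close>, and \<open>s\<close> kills \<open>r y\<close>.\<close>
      have S_eq: "cyclic_submodule R M (r \<odot>\<^bsub>M\<^esub> y) = S"
        using Min_sub_eq_cyclic[OF S submodule.smult_closed[OF S_sub r y(1)] y(2)] .
      have "s \<odot>\<^bsub>M\<^esub> (a \<odot>\<^bsub>M\<^esub> (r \<odot>\<^bsub>M\<^esub> y)) = \<zero>\<^bsub>M\<^esub>" if a: "a \<in> carrier R" for a
      proof -
        have "s \<odot>\<^bsub>M\<^esub> (a \<odot>\<^bsub>M\<^esub> (r \<odot>\<^bsub>M\<^esub> y)) = a \<odot>\<^bsub>M\<^esub> ((r \<otimes> s) \<odot>\<^bsub>M\<^esub> y)"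
          using a r s y_carrier by (simp add: smult_commute smult_assoc1)
        thus ?thesis using rs y(1) a by (simp add: ann_R_def)
      qed
      hence "s \<in> ann_R R M S" using s S_eq by (auto simp: ann_R_def cyclic_submodule_def)
      thus ?thesis by blast
    qed simp
  qed
qed

lemma cyclic_Min_sub_of_maximalideal:
  assumes m: "maximalideal m R" and y: "y \<in> carrier M" "y \<noteq> \<zero>\<^bsub>M\<^esub>"
    and killed: "\<And>r. r \<in> m \<Longrightarrow> r \<odot>\<^bsub>M\<^esub> y = \<zero>\<^bsub>M\<^esub>"
  shows "cyclic_submodule R M y \<in> Min_sub R M"
  unfolding Min_sub_def
proof (intro CollectI conjI allI impI)
  show "submodule (cyclic_submodule R M y) R M" using submodule_cyclic[OF y(1)] .
  show "cyclic_submodule R M y \<noteq> {\<zero>\<^bsub>M\<^esub>}" using cyclic_submodule_self[OF y(1)] y(2) by blast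
  fix L assume L: "submodule L R M \<and> L \<subseteq> cyclic_submodule R M y"
  show "L = {\<zero>\<^bsub>M\<^esub>} \<or> L = cyclic_submodule R M y"
  proof (cases "L = {\<zero>\<^bsub>M\<^esub>}")
    case False
    then obtain z where z: "z \<in> L" "z \<noteq> \<zero>\<^bsub>M\<^esub>" using submodule_zero L by blast
    then obtain t where t: "t \<in> carrier R" "z = t \<odot>\<^bsub>M\<^esub> y" using L unfolding cyclic_submodule_def by blast
    define J where "J = {a \<in> carrier R. a \<odot>\<^bsub>M\<^esub> y \<in> L}"
    have J: "ideal J R" unfolding J_def using ideal_colon L y(1) by blast
    have "m \<subseteq> J" unfolding J_def using killed submodule_zero L
      additive_subgroup.a_subset[OF ideal.axioms(1)[OF maximalideal.axioms(1)[OF m]]] by auto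
    moreover have "t \<in> J - m" using t z killed unfolding J_def by auto
    ultimately have "J = carrier R"
      using maximalideal.I_maximal[OF m J] unfolding J_def by blast
    hence "y \<in> L" unfolding J_def using y(1) by (metis (no_types, lifting) mem_Collect_eq one_closed smult_one)
    thus ?thesis using cyclic_submodule_subset L by blast
  qed simp
qed

lemma large_submodule_contains_Min_sub:
  assumes "large_submodule R M N" "S \<in> Min_sub R M"
  shows "S \<subseteq> N"
  using assms Min_sub_subset_Int Min_subD(1,2) unfolding large_submodule_def by blast

end

section \<open>Comultiplication modules\<close>

locale comultiplication = module +
  assumes comultiplication: "comultiplication_module R M"
begin

lemma ann_M_ann_R: assumes "submodule N R M" shows "ann_M R M (ann_R R M N) = N"
proof -
  obtain I where I: "ideal I R" "N = ann_M R M I"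
    using comultiplication assms unfolding comultiplication_module_def by blast
  have "I \<subseteq> ann_R R M N"
    using I additive_subgroup.a_subset[OF ideal.axioms(1)] by (auto simp: ann_R_def ann_M_def)
  hence "ann_M R M (ann_R R M N) \<subseteq> N" using I(2) by (auto simp: ann_M_def)
  moreover have "N \<subseteq> ann_M R M (ann_R R M N)"
    using submoduleE(1)[OF assms] by (auto simp: ann_M_def ann_R_def)
  ultimately show ?thesis by blast
qed

lemma subset_of_ann_R_subset:
  assumes "submodule N R M" "S \<subseteq> carrier M" "ann_R R M N \<subseteq> ann_R R M S"
  shows "S \<subseteq> N"
proof -
  have "S \<subseteq> ann_M R M (ann_R R M S)" using assms(2) by (auto simp: ann_M_def ann_R_def)
  also have "\<dots> \<subseteq> ann_M R M (ann_R R M N)" using assms(3) by (auto simp: ann_M_def)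
  finally show ?thesis using ann_M_ann_R[OF assms(1)] by simp
qed

lemma Min_sub_subset_set_add:
  assumes S: "S \<in> Min_sub R M" and N: "submodule N R M" and K: "submodule K R M"
    and S_NK: "S \<subseteq> N <+>\<^bsub>M\<^esub> K"
  shows "S \<subseteq> N \<or> S \<subseteq> K"
proof (rule ccontr)
  assume "\<not> (S \<subseteq> N \<or> S \<subseteq> K)"
  then obtain r s where r: "r \<in> ann_R R M N" "r \<notin> ann_R R M S"
    and s: "s \<in> ann_R R M K" "s \<notin> ann_R R M S"
    using subset_of_ann_R_subset[OF N] subset_of_ann_R_subset[OF K]
      submoduleE(1)[OF Min_subD(1)[OF S]] by blast
  have rs_carrier: "r \<in> carrier R" "s \<in> carrier R" using r(1) s(1) by (simp_all add: ann_R_def)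
  have "(r \<otimes> s) \<odot>\<^bsub>M\<^esub> z = \<zero>\<^bsub>M\<^esub>" if z: "z \<in> S" for z
  proof -
    obtain h k where hk: "h \<in> N" "k \<in> K" "z = h \<oplus>\<^bsub>M\<^esub> k"
      using z S_NK unfolding set_add_def' by blast
    have hk_carrier: "h \<in> carrier M" "k \<in> carrier M"
      using hk(1,2) submoduleE(1)[OF N] submoduleE(1)[OF K] by blast+
    have "(r \<otimes> s) \<odot>\<^bsub>M\<^esub> z = s \<odot>\<^bsub>M\<^esub> (r \<odot>\<^bsub>M\<^esub> h) \<oplus>\<^bsub>M\<^esub> r \<odot>\<^bsub>M\<^esub> (s \<odot>\<^bsub>M\<^esub> k)"
      using hk(3) hk_carrier rs_carrier by (simp add: smult_r_distr smult_assoc1 smult_commute)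
    thus ?thesis using r(1) s(1) hk(1,2) rs_carrier by (simp add: ann_R_def)
  qed
  hence "r \<otimes> s \<in> ann_R R M S" using rs_carrier by (simp add: ann_R_def)
  thus False
    using primeideal.I_prime[OF primeideal_ann_R_Min_sub[OF S]] rs_carrier r(2) s(2) by blast
qed

lemma exists_smult_killed_by_maximalideal:
  assumes x: "x \<in> carrier M" and m: "maximalideal m R" and ann_x: "ann_R R M {x} \<subseteq> m"
  shows "\<exists>s\<in>carrier R. s \<odot>\<^bsub>M\<^esub> x \<noteq> \<zero>\<^bsub>M\<^esub> \<and> (\<forall>r\<in>m. r \<odot>\<^bsub>M\<^esub> (s \<odot>\<^bsub>M\<^esub> x) = \<zero>\<^bsub>M\<^esub>)"
proof (rule ccontr)
  assume "\<not> ?thesis"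
  hence no_socle: "s \<odot>\<^bsub>M\<^esub> x = \<zero>\<^bsub>M\<^esub>" if "s \<in> carrier R" "\<forall>r\<in>m. r \<odot>\<^bsub>M\<^esub> (s \<odot>\<^bsub>M\<^esub> x) = \<zero>\<^bsub>M\<^esub>" for s
    using that by blast
  have m_ideal: "ideal m R" using maximalideal.axioms(1)[OF m] .
  have m_carrier: "m \<subseteq> carrier R" using additive_subgroup.a_subset[OF ideal.axioms(1)[OF m_ideal]] .
  let ?P = "{r \<odot>\<^bsub>M\<^esub> x | r. r \<in> m}"
  obtain J where J: "ideal J R" "?P = ann_M R M J"
    using comultiplication submodule_smult_ideal[OF m_ideal x]
    unfolding comultiplication_module_def by blast
  \<comment> \<open>\<open>J\<close> annihilates \<open>m x\<close>, so every \<open>j x\<close> is killed by \<open>m\<close> and hence is zero; thus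
      \<open>x \<in> ann_M J = m x\<close>.\<close>
  have "j \<odot>\<^bsub>M\<^esub> x = \<zero>\<^bsub>M\<^esub>" if j: "j \<in> J" for j
  proof (rule no_socle)
    show j_carrier: "j \<in> carrier R" using j additive_subgroup.a_subset[OF ideal.axioms(1)[OF J(1)]] by blast
    show "\<forall>r\<in>m. r \<odot>\<^bsub>M\<^esub> (j \<odot>\<^bsub>M\<^esub> x) = \<zero>\<^bsub>M\<^esub>"
    proof
      fix r assume r: "r \<in> m"
      hence "r \<odot>\<^bsub>M\<^esub> (j \<odot>\<^bsub>M\<^esub> x) = j \<odot>\<^bsub>M\<^esub> (r \<odot>\<^bsub>M\<^esub> x)"
        using j_carrier m_carrier x smult_commute by blast
      thus "r \<odot>\<^bsub>M\<^esub> (j \<odot>\<^bsub>M\<^esub> x) = \<zero>\<^bsub>M\<^esub>" using r j J(2) by (auto simp: ann_M_def)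
    qed
  qed
  hence "x \<in> ?P" using J(2) x by (simp add: ann_M_def)
  then obtain r where r: "r \<in> m" "x = r \<odot>\<^bsub>M\<^esub> x" by blast
  have r_carrier: "r \<in> carrier R" using r(1) m_carrier by blast
  have "(\<one> \<ominus> r) \<odot>\<^bsub>M\<^esub> x = x \<ominus>\<^bsub>M\<^esub> r \<odot>\<^bsub>M\<^esub> x"
    using r_carrier x by (simp add: a_minus_def M.minus_eq smult_l_distr smult_l_minus)
  also have "\<dots> = \<zero>\<^bsub>M\<^esub>" using r(2) x by (metis M.r_neg M.minus_eq)
  finally have "\<one> \<ominus> r \<in> m" using ann_x r_carrier by (auto simp: ann_R_def)
  hence "(\<one> \<ominus> r) \<oplus> r \<in> m" using additive_subgroup.a_closed[OF ideal.axioms(1)[OF m_ideal]] r(1) by blast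
  moreover have "(\<one> \<ominus> r) \<oplus> r = \<one>" using r_carrier by algebra
  ultimately show False using maximalideal.one_not_mem[OF m] by simp
qed

lemma exists_Min_sub_subset:
  assumes N: "submodule N R M" and N_nonzero: "N \<noteq> {\<zero>\<^bsub>M\<^esub>}"
  shows "\<exists>S\<in>Min_sub R M. S \<subseteq> N"
proof -
  obtain x where x: "x \<in> N" "x \<noteq> \<zero>\<^bsub>M\<^esub>" using N_nonzero submodule_zero[OF N] by blast
  have x_carrier: "x \<in> carrier M" using x(1) submoduleE(1)[OF N] by blast
  have "\<one> \<notin> ann_R R M {x}" using x(2) x_carrier by (simp add: ann_R_def)
  then obtain m where m: "maximalideal m R" "ann_R R M {x} \<subseteq> m"
    using exists_maximalideal_superset ideal_ann_R x_carrier by blast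
  then obtain s where s: "s \<in> carrier R" "s \<odot>\<^bsub>M\<^esub> x \<noteq> \<zero>\<^bsub>M\<^esub>" "\<forall>r\<in>m. r \<odot>\<^bsub>M\<^esub> (s \<odot>\<^bsub>M\<^esub> x) = \<zero>\<^bsub>M\<^esub>"
    using exists_smult_killed_by_maximalideal[OF x_carrier] by blast
  have "cyclic_submodule R M (s \<odot>\<^bsub>M\<^esub> x) \<in> Min_sub R M"
    using cyclic_Min_sub_of_maximalideal[OF m(1)] s x_carrier by simp
  moreover have "cyclic_submodule R M (s \<odot>\<^bsub>M\<^esub> x) \<subseteq> N"
    using cyclic_submodule_subset[OF N submodule.smult_closed[OF N s(1) x(1)]] .
  ultimately show ?thesis by blast
qed

lemma large_submodule_iff_contains_Min_sub:
  assumes N: "submodule N R M"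
  shows "large_submodule R M N \<longleftrightarrow> (\<forall>S\<in>Min_sub R M. S \<subseteq> N)"
proof
  assume "large_submodule R M N"
  thus "\<forall>S\<in>Min_sub R M. S \<subseteq> N" using large_submodule_contains_Min_sub by blast
next
  assume all: "\<forall>S\<in>Min_sub R M. S \<subseteq> N"
  have "N \<inter> L \<noteq> {\<zero>\<^bsub>M\<^esub>}" if L: "submodule L R M" "L \<noteq> {\<zero>\<^bsub>M\<^esub>}" for L
  proof -
    obtain S where S: "S \<in> Min_sub R M" "S \<subseteq> L" using exists_Min_sub_subset[OF L] by blast
    hence "S \<subseteq> N \<inter> L" using all by blast
    thus ?thesis using Min_subD(2)[OF S(1)] submodule_zero[OF Min_subD(1)[OF S(1)]] by blast
  qed
  thus "large_submodule R M N" using N unfolding large_submodule_def by blast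
qed

end

section \<open>The large sum graph\<close>

definition two_cliques :: "'v set \<Rightarrow> ('v \<Rightarrow> 'v \<Rightarrow> bool) \<Rightarrow> bool" where
  "two_cliques V E \<longleftrightarrow>
     (\<exists>V1 V2. V1 \<noteq> {} \<and> V2 \<noteq> {} \<and> V1 \<inter> V2 = {} \<and> V1 \<union> V2 = V
        \<and> (\<forall>N \<in> V1. \<forall>K \<in> V1. N \<noteq> K \<longrightarrow> E N K)
        \<and> (\<forall>N \<in> V2. \<forall>K \<in> V2. N \<noteq> K \<longrightarrow> E N K)
        \<and> (\<forall>N \<in> V1. \<forall>K \<in> V2. \<not> E N K))"

lemma two_cliques_not_connected:
  assumes "two_cliques V E" and edges_in_V: "\<And>u v. E u v \<Longrightarrow> v \<in> V"
  shows "\<not> graph_connected V E"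
proof
  assume connected: "graph_connected V E"
  obtain V1 V2 where V: "V1 \<noteq> {}" "V2 \<noteq> {}" "V1 \<inter> V2 = {}" "V1 \<union> V2 = V"
    and no_edge: "\<forall>N \<in> V1. \<forall>K \<in> V2. \<not> E N K"
    using assms(1) unfolding two_cliques_def by blast
  obtain x y where x: "x \<in> V1" and y: "y \<in> V2" using V(1,2) by blast
  have "(x, y) \<in> {(u, v). E u v}\<^sup>*" using connected x y V(4) unfolding graph_connected_def by blast
  hence "y \<in> V1"
  proof (induction rule: rtrancl_induct)
    case base
    show ?case using x .
  next
    case (step u v)
    hence "E u v" by simp
    thus ?case using edges_in_V no_edge step.IH V(4) by blast
  qed
  thus False using y V(3) by blast
qed

context comultiplication
begin

lemma lsg_vertices_iff:
  "N \<in> lsg_vertices R M \<longleftrightarrow>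
     submodule N R M \<and> N \<noteq> {\<zero>\<^bsub>M\<^esub>} \<and> (\<exists>S\<in>Min_sub R M. \<not> S \<subseteq> N)"
proof -
  have "\<not> large_submodule R M N \<longleftrightarrow> (\<exists>S\<in>Min_sub R M. \<not> S \<subseteq> N)" if "submodule N R M"
    using large_submodule_iff_contains_Min_sub[OF that] by blast
  thus ?thesis unfolding lsg_vertices_def by blast
qed

lemma lsg_adj_iff:
  assumes N: "N \<in> lsg_vertices R M" and K: "K \<in> lsg_vertices R M" and "N \<noteq> K"
  shows "lsg_adj R M N K \<longleftrightarrow> (\<exists>S\<in>Min_sub R M. \<not> S \<subseteq> N \<and> \<not> S \<subseteq> K)"
proof -
  have N_sub: "submodule N R M" and K_sub: "submodule K R M"
    using N K by (simp_all add: lsg_vertices_iff)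
  have "lsg_adj R M N K \<longleftrightarrow> \<not> large_submodule R M (N <+>\<^bsub>M\<^esub> K)"
    using assms by (simp add: lsg_adj_def)
  also have "\<dots> \<longleftrightarrow> (\<exists>S\<in>Min_sub R M. \<not> S \<subseteq> N <+>\<^bsub>M\<^esub> K)"
    using large_submodule_iff_contains_Min_sub[OF submodule_set_add[OF N_sub K_sub]] by simp
  also have "\<dots> \<longleftrightarrow> (\<exists>S\<in>Min_sub R M. \<not> S \<subseteq> N \<and> \<not> S \<subseteq> K)"
  proof (intro bex_cong refl)
    fix S assume "S \<in> Min_sub R M"
    thus "\<not> S \<subseteq> N <+>\<^bsub>M\<^esub> K \<longleftrightarrow> \<not> S \<subseteq> N \<and> \<not> S \<subseteq> K"
      using Min_sub_subset_set_add[OF _ N_sub K_sub] set_add_upper[OF N_sub K_sub] by blast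
  qed
  finally show ?thesis .
qed

lemma Min_sub_in_lsg_vertices:
  assumes S: "S \<in> Min_sub R M" and T: "T \<in> Min_sub R M" and "S \<noteq> T"
  shows "S \<in> lsg_vertices R M"
  unfolding lsg_vertices_iff
  using Min_subD(1,2)[OF S] Min_sub_not_subset[OF T S] assms(3) T by blast

lemma lsg_connected_if_three_Min_sub:
  assumes S: "S1 \<in> Min_sub R M" "S2 \<in> Min_sub R M" "S3 \<in> Min_sub R M"
    and distinct: "S1 \<noteq> S2" "S1 \<noteq> S3" "S2 \<noteq> S3"
  shows "graph_connected (lsg_vertices R M) (lsg_adj R M)"
  unfolding graph_connected_def
proof (intro ballI)
  let ?E = "{(u, v). lsg_adj R M u v}"
  have path: "(u, v) \<in> ?E\<^sup>*"
    if u: "u \<in> lsg_vertices R M" and v: "v \<in> lsg_vertices R M"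
      and S: "S \<in> Min_sub R M" "\<not> S \<subseteq> u" "\<not> S \<subseteq> v" for u v S
  proof (cases "u = v")
    case False
    hence "lsg_adj R M u v" using lsg_adj_iff[OF u v False] S by blast
    thus ?thesis by (intro r_into_rtrancl) simp
  qed simp
  fix N K assume N: "N \<in> lsg_vertices R M" and K: "K \<in> lsg_vertices R M"
  obtain SN where SN: "SN \<in> Min_sub R M" "\<not> SN \<subseteq> N" using N unfolding lsg_vertices_iff by blast
  obtain SK where SK: "SK \<in> Min_sub R M" "\<not> SK \<subseteq> K" using K unfolding lsg_vertices_iff by blast
  \<comment> \<open>A third minimal submodule \<open>T\<close> contains neither \<open>SN\<close> nor \<open>SK\<close>, so \<open>N - T - K\<close> is a path.\<close>
  have "\<exists>T\<in>{S1, S2, S3}. T \<noteq> SN \<and> T \<noteq> SK" using distinct by auto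
  then obtain T where T: "T \<in> Min_sub R M" "T \<noteq> SN" "T \<noteq> SK" using S by blast
  have T_vertex: "T \<in> lsg_vertices R M" using Min_sub_in_lsg_vertices[OF T(1) SN(1) T(2)] .
  have "(N, T) \<in> ?E\<^sup>*"
    using path[OF N T_vertex SN] Min_sub_not_subset[OF SN(1) T(1)] T(2) by blast
  moreover have "(T, K) \<in> ?E\<^sup>*"
    using path[OF T_vertex K SK(1) _ SK(2)] Min_sub_not_subset[OF SK(1) T(1)] T(3) by blast
  ultimately show "(N, K) \<in> ?E\<^sup>*" by (rule rtrancl_trans)
qed

lemma card_Min_sub_eq_2_if_not_connected:
  assumes "lsg_vertices R M \<noteq> {}" and not_connected: "\<not> graph_connected (lsg_vertices R M) (lsg_adj R M)"
  shows "card (Min_sub R M) = 2"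
proof -
  obtain N where N: "N \<in> lsg_vertices R M" using assms(1) by blast
  obtain S1 where S1: "S1 \<in> Min_sub R M" "\<not> S1 \<subseteq> N" using N unfolding lsg_vertices_iff by blast
  obtain S2 where S2: "S2 \<in> Min_sub R M" "S2 \<subseteq> N"
    using N exists_Min_sub_subset unfolding lsg_vertices_iff by blast
  have "S1 \<noteq> S2" using S1 S2 by blast
  moreover have "Min_sub R M = {S1, S2}"
  proof
    show "Min_sub R M \<subseteq> {S1, S2}"
      using lsg_connected_if_three_Min_sub[OF S1(1) S2(1) _ \<open>S1 \<noteq> S2\<close>] not_connected by blast
  qed (use S1 S2 in blast)
  ultimately show ?thesis by simp
qed

lemma two_cliques_if_card_Min_sub_eq_2:
  assumes "card (Min_sub R M) = 2"
  shows "two_cliques (lsg_vertices R M) (lsg_adj R M)"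
proof -
  obtain S1 S2 where S: "Min_sub R M = {S1, S2}" "S1 \<noteq> S2" using assms card_2_iff by metis
  have S1: "S1 \<in> Min_sub R M" and S2: "S2 \<in> Min_sub R M" using S(1) by auto
  have contains_one: "S1 \<subseteq> N \<longleftrightarrow> \<not> S2 \<subseteq> N" if N: "N \<in> lsg_vertices R M" for N
  proof -
    obtain T where "T \<in> Min_sub R M" "\<not> T \<subseteq> N" using N unfolding lsg_vertices_iff by blast
    moreover obtain T' where "T' \<in> Min_sub R M" "T' \<subseteq> N"
      using N exists_Min_sub_subset unfolding lsg_vertices_iff by blast
    ultimately show ?thesis using S(1) by blast
  qed
  define V1 where "V1 = {N \<in> lsg_vertices R M. S1 \<subseteq> N}"
  define V2 where "V2 = {N \<in> lsg_vertices R M. S2 \<subseteq> N}"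
  have clique: "lsg_adj R M N K"
    if "N \<in> lsg_vertices R M" "K \<in> lsg_vertices R M" "N \<noteq> K" "S \<in> Min_sub R M" "\<not> S \<subseteq> N" "\<not> S \<subseteq> K"
    for N K S
    using lsg_adj_iff[OF that(1-3)] that(4-6) by blast
  have "V1 \<noteq> {}" unfolding V1_def using Min_sub_in_lsg_vertices[OF S1 S2 S(2)] by blast
  moreover have "V2 \<noteq> {}" unfolding V2_def using Min_sub_in_lsg_vertices[OF S2 S1] S(2) by blast
  moreover have "V1 \<inter> V2 = {}" unfolding V1_def V2_def using contains_one by blast
  moreover have "V1 \<union> V2 = lsg_vertices R M" unfolding V1_def V2_def using contains_one by blast
  moreover have "\<forall>N \<in> V1. \<forall>K \<in> V1. N \<noteq> K \<longrightarrow> lsg_adj R M N K"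
  proof (intro ballI impI)
    fix N K assume N: "N \<in> V1" and K: "K \<in> V1" and "N \<noteq> K"
    hence "\<not> S2 \<subseteq> N" "\<not> S2 \<subseteq> K" using contains_one S(2) unfolding V1_def by blast+
    thus "lsg_adj R M N K" using clique[OF _ _ \<open>N \<noteq> K\<close> S2] N K unfolding V1_def by blast
  qed
  moreover have "\<forall>N \<in> V2. \<forall>K \<in> V2. N \<noteq> K \<longrightarrow> lsg_adj R M N K"
  proof (intro ballI impI)
    fix N K assume N: "N \<in> V2" and K: "K \<in> V2" and "N \<noteq> K"
    hence "\<not> S1 \<subseteq> N" "\<not> S1 \<subseteq> K" using contains_one S(2) unfolding V2_def by blast+
    thus "lsg_adj R M N K" using clique[OF _ _ \<open>N \<noteq> K\<close> S1] N K unfolding V2_def by blast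
  qed
  moreover have "\<forall>N \<in> V1. \<forall>K \<in> V2. \<not> lsg_adj R M N K"
  proof (intro ballI notI)
    fix N K assume N: "N \<in> V1" and K: "K \<in> V2" and "lsg_adj R M N K"
    hence "\<exists>S\<in>Min_sub R M. \<not> S \<subseteq> N \<and> \<not> S \<subseteq> K"
      using lsg_adj_iff[of N K] by (simp add: lsg_adj_def)
    thus False using N K S(1) unfolding V1_def V2_def by blast
  qed
  ultimately show ?thesis unfolding two_cliques_def by (intro exI[of _ V1] exI[of _ V2]) simp
qed

end

theorem theorem2p6:
  fixes R :: "('a, 'c) ring_scheme" and M :: "('a, 'b, 'd) module_scheme"
  assumes "cring R"
    and "module R M"
    and "carrier M \<noteq> {\<zero>\<^bsub>M\<^esub>}"
    and "comultiplication_module R M"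
    and "lsg_vertices R M \<noteq> {}"
  shows "(\<not> graph_connected (lsg_vertices R M) (lsg_adj R M) \<longleftrightarrow> card (Min_sub R M) = 2)
    \<and> (card (Min_sub R M) = 2 \<longleftrightarrow>
        (\<exists>V1 V2. V1 \<noteq> {} \<and> V2 \<noteq> {} \<and> V1 \<inter> V2 = {} \<and> V1 \<union> V2 = lsg_vertices R M
           \<and> (\<forall>N \<in> V1. \<forall>K \<in> V1. N \<noteq> K \<longrightarrow> lsg_adj R M N K)
           \<and> (\<forall>N \<in> V2. \<forall>K \<in> V2. N \<noteq> K \<longrightarrow> lsg_adj R M N K)
           \<and> (\<forall>N \<in> V1. \<forall>K \<in> V2. \<not> lsg_adj R M N K)))"
proof -
  \<comment> \<open>\<open>cring R\<close> is part of \<open>module R M\<close>, and \<open>M \<noteq> 0\<close> already follows from the existence of a vertex.\<close>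
  interpret comultiplication R M
    by (intro comultiplication.intro comultiplication_axioms.intro assms(2,4))
  have "two_cliques (lsg_vertices R M) (lsg_adj R M) \<Longrightarrow>
      \<not> graph_connected (lsg_vertices R M) (lsg_adj R M)"
    by (erule two_cliques_not_connected) (simp add: lsg_adj_def)
  hence "(\<not> graph_connected (lsg_vertices R M) (lsg_adj R M) \<longleftrightarrow> card (Min_sub R M) = 2)
    \<and> (card (Min_sub R M) = 2 \<longleftrightarrow> two_cliques (lsg_vertices R M) (lsg_adj R M))"
    using card_Min_sub_eq_2_if_not_connected[OF assms(5)] two_cliques_if_card_Min_sub_eq_2 by blast
  thus ?thesis unfolding two_cliques_def .
qed

end
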